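(* Define the polynomial $\phi(\alpha_1,\alpha_2,\alpha_3,\beta_1,\beta_2,\beta_3)$ by $$\begin{aligned} \phi ={}& -(\alpha_2\beta_3+\alpha_3\beta_2)\alpha_1^8\alpha_2^2\alpha_3^2\beta_2^4\beta_3^4\\ &-(\alpha_2^4\beta_3^4-\alpha_2^3\alpha_3\beta_2\beta_3^3+\alpha_2^2\alpha_3^2\beta_2^2\beta_3^2-\alpha_2\alpha_3^3\beta_2^3\beta_3+\alpha_3^4\beta_2^4)(\alpha_2\beta_3+\alpha_3\beta_2)^2\alpha_1^7\beta_1\beta_2\beta_3\\ &-(\alpha_2\beta_3+\alpha_3\beta_2)(\alpha_2^4\beta_3^4+\alpha_2^2\alpha_3^2\beta_2^2\beta_3^2+\alpha_3^4\beta_2^4)\alpha_1^6\alpha_2\alpha_3\beta_1^2\beta_2\beta_3\\ &-2\alpha_1^5\alpha_2^4\alpha_3^4\beta_1^3\beta_2^3\beta_3^3\\ &-(\alpha_2\beta_3+\alpha_3\beta_2)(\alpha_2^4\beta_3^4-2\alpha_2^3\alpha_3\beta_2\beta_3^3+\alpha_2^2\alpha_3^2\beta_2^2\beta_3^2-2\alpha_2\alpha_3^3\beta_2^3\beta_3+\alpha_3^4\beta_2^4)\alpha_1^4\alpha_2^2\alpha_3^2\beta_1^4\\ &+2(\alpha_2^2\beta_3^2+\alpha_2\alpha_3\beta_2\beta_3+\alpha_3^2\beta_2^2)\alpha_1^3\alpha_2^4\alpha_3^4\beta_1^5\beta_2\beta_3\\ &+(\alpha_2\beta_3+\alpha_3\beta_2)(\alpha_2^2\beta_3^2+\alpha_3^2\beta_2^2)\alpha_1^2\alpha_2^4\alpha_3^4\beta_1^6\\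 &+(\alpha_2^2\beta_3^2+\alpha_3^2\beta_2^2)\alpha_1\alpha_2^5\alpha_3^5\beta_1^7. \end{aligned}$$ Let $p,q,r,u,v,w$ be arbitrary integers and let $$A=\begin{bmatrix} \phi(p,q,r,u,v,w) & \phi(q,r,p,v,w,u) & \phi(r,p,q,w,u,v)\\ p & q & r\\ u & v & w \end{bmatrix}.$$ Then $\det A = k$ and $\det(A^{(3)}) = k^3$, where $$\begin{aligned} k ={}& pqr(pv-qu)(pw-ru)(qw-rv)(p^2v^2+pquv+q^2u^2)\\ &\times(p^2w^2+pruw+r^2u^2)(q^2w^2+qrvw+r^2v^2)(pqw+prv+qru). \end{aligned}$$
   Context: For a matrix $M=(m_{ij})$, $M^{(3)}$ denotes the matrix $(m_{ij}^3)$ obtained by replacing each entry by its cube. *)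

theory Defs
  imports "HOL-Analysis.Analysis"
begin

definition phi :: "int \<Rightarrow> int \<Rightarrow> int \<Rightarrow> int \<Rightarrow> int \<Rightarrow> int \<Rightarrow> int" where
  "phi a1 a2 a3 b1 b2 b3 =
     - (a2*b3 + a3*b2) * a1^8 * a2^2 * a3^2 * b2^4 * b3^4
     - (a2^4*b3^4 - a2^3*a3*b2*b3^3 + a2^2*a3^2*b2^2*b3^2 - a2*a3^3*b2^3*b3 + a3^4*b2^4)
         * (a2*b3 + a3*b2)^2 * a1^7 * b1 * b2 * b3
     - (a2*b3 + a3*b2) * (a2^4*b3^4 + a2^2*a3^2*b2^2*b3^2 + a3^4*b2^4) * a1^6 * a2 * a3 * b1^2 * b2 * b3
     - 2 * a1^5 * a2^4 * a3^4 * b1^3 * b2^3 * b3^3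
     - (a2*b3 + a3*b2) * (a2^4*b3^4 - 2*a2^3*a3*b2*b3^3 + a2^2*a3^2*b2^2*b3^2 - 2*a2*a3^3*b2^3*b3 + a3^4*b2^4)
         * a1^4 * a2^2 * a3^2 * b1^4
     + 2 * (a2^2*b3^2 + a2*a3*b2*b3 + a3^2*b2^2) * a1^3 * a2^4 * a3^4 * b1^5 * b2 * b3
     + (a2*b3 + a3*b2) * (a2^2*b3^2 + a3^2*b2^2) * a1^2 * a2^4 * a3^4 * b1^6
     + (a2^2*b3^2 + a3^2*b2^2) * a1 * a2^5 * a3^5 * b1^7"

definition matA :: "int \<Rightarrow> int \<Rightarrow> int \<Rightarrow> int \<Rightarrow> int \<Rightarrow> int \<Rightarrow> int^3^3" where
  "matA p q r u y w = vector [
      vector [phi p q r u y w, phi q r p y w u, phi r p q w u y],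
      vector [p, q, r],
      vector [u, y, w]]"

definition cube_entries :: "'a::power^'n^'m \<Rightarrow> 'a^'n^'m" where
  "cube_entries M = (\<chi> i j. (M $ i $ j) ^ 3)"

definition kval :: "int \<Rightarrow> int \<Rightarrow> int \<Rightarrow> int \<Rightarrow> int \<Rightarrow> int \<Rightarrow> int" where
  "kval p q r u y w =
     p*q*r*(p*y - q*u)*(p*w - r*u)*(q*w - r*y)*(p^2*y^2 + p*q*u*y + q^2*u^2)
     * (p^2*w^2 + p*r*u*w + r^2*u^2)*(q^2*w^2 + q*r*y*w + r^2*y^2)*(p*q*w + p*r*y + q*r*u)"

end

theory Submission
  imports Defs
begin

lemma det_vector_rows:
  fixes a0 a1 a2 b0 b1 b2 c0 c1 c2 :: "'a::comm_ring_1"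
  shows "det (vector [vector [a0, a1, a2], vector [b0, b1, b2], vector [c0, c1, c2]] :: 'a^3^3) =
    a0 * (b1 * c2 - b2 * c1) - a1 * (b0 * c2 - b2 * c0) + a2 * (b0 * c1 - b1 * c0)"
  by (simp add: det_3 algebra_simps)

lemma det_matA:
  "det (matA p q r u y w) =
     phi p q r u y w * (q*w - r*y) - phi q r p y w u * (p*w - r*u) + phi r p q w u y * (p*y - q*u)"
  unfolding matA_def by (rule det_vector_rows)

lemma cube_entries_matA:
  "cube_entries (matA p q r u y w) = vector [
      vector [phi p q r u y w ^ 3, phi q r p y w u ^ 3, phi r p q w u y ^ 3],
      vector [p^3, q^3, r^3],
      vector [u^3, y^3, w^3]]"
  unfolding matA_def cube_entries_def by (simp add: vec_eq_iff forall_3 vector_def)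

lemma det_cube_entries_matA:
  "det (cube_entries (matA p q r u y w)) =
     phi p q r u y w ^ 3 * (q^3*w^3 - r^3*y^3) - phi q r p y w u ^ 3 * (p^3*w^3 - r^3*u^3)
     + phi r p q w u y ^ 3 * (p^3*y^3 - q^3*u^3)"
  unfolding cube_entries_matA by (rule det_vector_rows)

text \<open>Normalising the cubic identity with \<open>\<phi>\<close> in its factored form exhausts memory; with
  \<open>\<phi>\<close> expanded into its 28 monomials it is quick.\<close>
lemma phi_expanded:
  "phi a1 a2 a3 b1 b2 b3 =
     - (a1^8*a2^3*a3^2*b2^4*b3^5) - a1^8*a2^2*a3^3*b2^5*b3^4
     - a1^7*a2^6*b1*b2*b3^7 - a1^7*a2^5*a3*b1*b2^2*b3^6 - a1^7*a2*a3^5*b1*b2^6*b3^2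
     - a1^7*a3^6*b1*b2^7*b3
     - a1^6*a2^6*a3*b1^2*b2*b3^6 - a1^6*a2^5*a3^2*b1^2*b2^2*b3^5 - a1^6*a2^4*a3^3*b1^2*b2^3*b3^4
     - a1^6*a2^3*a3^4*b1^2*b2^4*b3^3 - a1^6*a2^2*a3^5*b1^2*b2^5*b3^2 - a1^6*a2*a3^6*b1^2*b2^6*b3
     - 2*a1^5*a2^4*a3^4*b1^3*b2^3*b3^3
     - a1^4*a2^7*a3^2*b1^4*b3^5 + a1^4*a2^6*a3^3*b1^4*b2*b3^4 + a1^4*a2^5*a3^4*b1^4*b2^2*b3^3
     + a1^4*a2^4*a3^5*b1^4*b2^3*b3^2 + a1^4*a2^3*a3^6*b1^4*b2^4*b3 - a1^4*a2^2*a3^7*b1^4*b2^5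
     + 2*a1^3*a2^6*a3^4*b1^5*b2*b3^3 + 2*a1^3*a2^5*a3^5*b1^5*b2^2*b3^2 + 2*a1^3*a2^4*a3^6*b1^5*b2^3*b3
     + a1^2*a2^7*a3^4*b1^6*b3^3 + a1^2*a2^6*a3^5*b1^6*b2*b3^2 + a1^2*a2^5*a3^6*b1^6*b2^2*b3
     + a1^2*a2^4*a3^7*b1^6*b2^3
     + a1*a2^7*a3^5*b1^7*b3^2 + a1*a2^5*a3^7*b1^7*b2^2"
  unfolding phi_def by algebra

lemma phi_cofactor_identity:
  "phi p q r u y w * (q*w - r*y) - phi q r p y w u * (p*w - r*u) + phi r p q w u y * (p*y - q*u)
     = kval p q r u y w"
  unfolding phi_expanded kval_def by algebra

lemma phi_cubed_cofactor_identity: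
  "phi p q r u y w ^ 3 * (q^3*w^3 - r^3*y^3) - phi q r p y w u ^ 3 * (p^3*w^3 - r^3*u^3)
     + phi r p q w u y ^ 3 * (p^3*y^3 - q^3*u^3) = kval p q r u y w ^ 3"
  unfolding phi_expanded kval_def by algebra

theorem theorem2:
  fixes p q r u y w :: int
  shows "det (matA p q r u y w) = kval p q r u y w
       \<and> det (cube_entries (matA p q r u y w)) = (kval p q r u y w) ^ 3"
  by (simp add: det_matA det_cube_entries_matA phi_cofactor_identity phi_cubed_cofactor_identity)

end
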